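(* Let $\mathcal B=(\mathcal T,A,p,c)$ be a BMDP. For every list $\alpha\in\mathcal T^*$ of types, $\mathrm{ETotal}_*(\alpha)=\sum_{i=1}^{|\alpha|}\mathrm{ETotal}_*(\alpha_i)$ (in $[0,\infty]$). Moreover, for every $q\in\mathcal T$, $\mathrm{ETotal}_*(q)=\min_{a\in A(q)}\Big(c(q,a)+\sum_{\alpha\in\mathcal T^*}p(q,a)(\alpha)\sum_{i=1}^{|\alpha|}\mathrm{ETotal}_*(\alpha_i)\Big)$.
   Context: A branching Markov decision process (BMDP) is a tuple $\mathcal B=(\mathcal T,A,p,c)$ where $\mathcal T$ is a finite set of types, $A$ is a finite set of actions, $p:\mathcal T\times A\to \mathrm{Dist}(\mathcal T^* )$ is a partial function assigning to some pairs $(q,a)$ a probability distribution with finite support over the set $\mathcal T^*$ of finite lists of types, and $c:\mathcal T\times A\to\mathbb R_{>0}$ is a cost function with strictly positive values. $A(q)$ denotes the (nonempty) set of actions $a$ for which $p(q,a)$ is defined. For a list $\alpha$, $|\alpha|$ is its length and $\alpha_i$ its $i$-th element; $\varepsilon$ is the empty list. Semantics: the BMDP induces an MDP whose states are lists $\alpha\in\mathcal T^*$. In state $\alpha$ the enabled actions are pairs $(i,a)$ with $1\le i\le|\alpha|$ and $a\in A(\alpha_i)$; taking $(i,a)$ incurs cost $c(\alpha_i,a)$ and moves to $\alpha_1\cdots\alpha_{i-1}\cdot\beta\cdot\alpha_{i+1}\cdots\alpha_{|\alpha|}$ with probability $p(\alpha_i,a)(\beta)$. The state $\varepsilon$ has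 no actions and is absorbing with no further cost. A strategy maps each finite history to a probability distribution over actions enabled in its last state; a strategy $\sigma$ and initial state $\alpha$ induce a probability measure on runs. $\mathrm{ETotal}_N(\alpha,\sigma)$ is the expected sum of costs in the first $N$ steps, $\mathrm{ETotal}_*(\alpha,\sigma)=\lim_{N\to\infty}\mathrm{ETotal}_N(\alpha,\sigma)\in[0,\infty]$, and $\mathrm{ETotal}_*(\alpha)=\inf_\sigma\mathrm{ETotal}_*(\alpha,\sigma)$ over all strategies. Conventions $0\cdot\infty=0$, $r+\infty=\infty$. *)

theory Defs
  imports "HOL-Probability.Probability_Mass_Function"
begin

text \<open>A q is the (nonempty) set of actions enabled at q (where p is defined),
  p q a the successor distribution over lists of types (finite support),
  c q a the cost (strictly positive).\<close>

definition bmdp :: "('q::finite \<Rightarrow> 'a::finite set) \<Rightarrow> ('q \<Rightarrow> 'a \<Rightarrow> 'q list pmf) \<Rightarrow> ('q \<Rightarrow> 'a \<Rightarrow> real) \<Rightarrow> bool" where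
  "bmdp A p c \<longleftrightarrow> (\<forall>q. A q \<noteq> {} \<and> (\<forall>a\<in>A q. finite (set_pmf (p q a)) \<and> c q a > 0))"

text \<open>Histories: initial state and list of (action, successor state) steps.
  An action of the induced MDP is a pair (i, a) with 0-based position i.\<close>
type_synonym ('q,'a) hist = "'q list \<times> ((nat \<times> 'a) \<times> 'q list) list"
type_synonym ('q,'a) strat = "('q,'a) hist \<Rightarrow> (nat \<times> 'a) pmf"

definition last_st :: "('q,'a) hist \<Rightarrow> 'q list" where
  "last_st h = (if snd h = [] then fst h else snd (last (snd h)))"

definition replace_at :: "'q list \<Rightarrow> nat \<Rightarrow> 'q list \<Rightarrow> 'q list" where
  "replace_at \<alpha> i \<beta> = take i \<alpha> @ \<beta> @ drop (Suc i) \<alpha>"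

definition enabled :: "('q \<Rightarrow> 'a set) \<Rightarrow> 'q list \<Rightarrow> (nat \<times> 'a) set" where
  "enabled A \<alpha> = {(i, a). i < length \<alpha> \<and> a \<in> A (\<alpha> ! i)}"

definition strategy :: "('q \<Rightarrow> 'a set) \<Rightarrow> ('q,'a) strat \<Rightarrow> bool" where
  "strategy A \<sigma> \<longleftrightarrow> (\<forall>h. last_st h \<noteq> [] \<longrightarrow> set_pmf (\<sigma> h) \<subseteq> enabled A (last_st h))"

primrec etotN :: "('q \<Rightarrow> 'a \<Rightarrow> 'q list pmf) \<Rightarrow> ('q \<Rightarrow> 'a \<Rightarrow> real) \<Rightarrow> ('q,'a) strat
    \<Rightarrow> nat \<Rightarrow> ('q,'a) hist \<Rightarrow> ennreal" where
  "etotN p c \<sigma> 0 h = 0"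
| "etotN p c \<sigma> (Suc n) h =
     (if last_st h = [] then 0 else
      \<integral>\<^sup>+ ia. (ennreal (c (last_st h ! fst ia) (snd ia)) +
          \<integral>\<^sup>+ \<beta>. etotN p c \<sigma> n (fst h, snd h @ [(ia, replace_at (last_st h) (fst ia) \<beta>)])
            \<partial>measure_pmf (p (last_st h ! fst ia) (snd ia)))
        \<partial>measure_pmf (\<sigma> h))"

definition ETotalN :: "('q \<Rightarrow> 'a \<Rightarrow> 'q list pmf) \<Rightarrow> ('q \<Rightarrow> 'a \<Rightarrow> real) \<Rightarrow> nat \<Rightarrow> 'q list \<Rightarrow> ('q,'a) strat \<Rightarrow> ennreal" where
  "ETotalN p c N \<alpha> \<sigma> = etotN p c \<sigma> N (\<alpha>, [])"

definition ETotal_strat :: "('q \<Rightarrow> 'a \<Rightarrow> 'q list pmf) \<Rightarrow> ('q \<Rightarrow> 'a \<Rightarrow> real) \<Rightarrow> 'q list \<Rightarrow> ('q,'a) strat \<Rightarrow> ennreal" where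
  "ETotal_strat p c \<alpha> \<sigma> = lim (\<lambda>N. ETotalN p c N \<alpha> \<sigma>)"

definition ETotal :: "('q \<Rightarrow> 'a set) \<Rightarrow> ('q \<Rightarrow> 'a \<Rightarrow> 'q list pmf) \<Rightarrow> ('q \<Rightarrow> 'a \<Rightarrow> real) \<Rightarrow> 'q list \<Rightarrow> ennreal" where
  "ETotal A p c \<alpha> = (INF \<sigma> \<in> {\<sigma>. strategy A \<sigma>}. ETotal_strat p c \<alpha> \<sigma>)"

end

theory Submission
  imports Defs
begin

(* Both sides are least fixed points of Bellman operators. ETotal on lists is the least fixed
   point V of the operator that expands one position optimally, and it is attained by a
   stationary strategy; the right-hand side is built from the least fixed point U of the
   type-level operator. Expanding the first position with a U-optimal action makes the sum of U
   over a list a pre-fixed point of the list operator, so V is at most that sum. Conversely, for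
   each value-iteration approximation U_n of U (which is finite) the sum of U_n is a post-fixed
   point of the cost operator of the optimal stationary strategy and, since costs are bounded
   away from 0, it is dominated by a constant multiple of V. Wherever V is finite the expected
   cost still to be paid under that strategy tends to 0, which forces the sum of U_n below V. *)

lemma sup_continuous_Min:
  fixes F :: "'i \<Rightarrow> 'a::complete_lattice \<Rightarrow> 'b::complete_linorder"
  assumes "finite S" "S \<noteq> {}" "\<And>s. s \<in> S \<Longrightarrow> sup_continuous (F s)"
  shows "sup_continuous (\<lambda>x. Min ((\<lambda>s. F s x) ` S))"
  using assms
proof (induction S rule: finite_ne_induct)
  case (insert s S)
  then show ?case
    by (simp add: inf_min[symmetric]) (intro sup_continuous_inf; simp)
qed simp

lemma sup_continuous_sum_list_map:
  "sup_continuous (\<lambda>f :: 'a \<Rightarrow> ennreal. sum_list (map f xs))"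
  by (induction xs) (auto intro: order_continuous_intros)

lemma ennreal_sum_list_less_top:
  "(\<And>x. f x < top) \<Longrightarrow> sum_list (map f xs) < (top :: ennreal)"
  by (induction xs) auto

lemma nn_integral_const_pmf: "(\<integral>\<^sup>+x. k \<partial>measure_pmf M) = k"
  by (simp add: measure_pmf.emeasure_space_1)

section \<open>Policy evaluation in Markov chains with nonnegative rewards\<close>

definition transition_op :: "('x \<Rightarrow> 'x pmf) \<Rightarrow> ('x \<Rightarrow> ennreal) \<Rightarrow> 'x \<Rightarrow> ennreal" where
  "transition_op M f x = (\<integral>\<^sup>+y. f y \<partial>M x)"

definition policy_eval_op ::
    "('x \<Rightarrow> ennreal) \<Rightarrow> ('x \<Rightarrow> 'x pmf) \<Rightarrow> ('x \<Rightarrow> ennreal) \<Rightarrow> 'x \<Rightarrow> ennreal" where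
  "policy_eval_op r M f x = r x + transition_op M f x"

lemma transition_op_add:
  "transition_op M (\<lambda>y. f y + g y) x = transition_op M f x + transition_op M g x"
  unfolding transition_op_def by (rule nn_integral_add) auto

lemma transition_op_cmult: "transition_op M (\<lambda>y. C * f y) x = C * transition_op M f x"
  unfolding transition_op_def by (rule nn_integral_cmult) auto

lemma transition_op_mono: "(\<And>y. f y \<le> g y) \<Longrightarrow> transition_op M f x \<le> transition_op M g x"
  unfolding transition_op_def by (rule nn_integral_mono)

lemma policy_eval_op_iterate_Suc:
  "(policy_eval_op r M ^^ Suc k) f x = r x + transition_op M ((policy_eval_op r M ^^ k) f) x"
  by (simp add: policy_eval_op_def)

lemma transition_op_iterate_Suc:
  "(transition_op M ^^ Suc k) f x = transition_op M ((transition_op M ^^ k) f) x"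
  by simp

lemma sup_continuous_policy_eval_op: "sup_continuous (policy_eval_op r M)"
  unfolding policy_eval_op_def transition_op_def by (intro order_continuous_intros) auto

lemma policy_eval_op_lfp: "policy_eval_op r M (lfp (policy_eval_op r M)) = lfp (policy_eval_op r M)"
  by (rule lfp_fixpoint[OF sup_continuous_mono[OF sup_continuous_policy_eval_op]])

lemma lfp_policy_eval_op_split:
  "lfp (policy_eval_op r M) x =
    (policy_eval_op r M ^^ k) bot x + (transition_op M ^^ k) (lfp (policy_eval_op r M)) x"
proof (induction k arbitrary: x)
  case (Suc k)
  let ?V = "lfp (policy_eval_op r M)"
  have "?V x = policy_eval_op r M ?V x"
    by (simp only: policy_eval_op_lfp)
  also have "\<dots> = r x + transition_op M ?V x"
    by (rule policy_eval_op_def)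
  also have "transition_op M ?V x =
      transition_op M (\<lambda>y. (policy_eval_op r M ^^ k) bot y + (transition_op M ^^ k) ?V y) x"
    by (simp only: Suc.IH[symmetric])
  finally show ?case
    by (simp only: transition_op_add policy_eval_op_iterate_Suc transition_op_iterate_Suc add.assoc)
qed simp

lemma transition_op_iterate_lfp_tendsto_0:
  assumes "lfp (policy_eval_op r M) x < top"
  shows "(\<lambda>k. (transition_op M ^^ k) (lfp (policy_eval_op r M)) x) \<longlonglongrightarrow> 0"
proof -
  let ?G = "policy_eval_op r M"
  have "incseq (\<lambda>k. (?G ^^ k) bot x)"
    using mono_funpow[OF sup_continuous_mono[OF sup_continuous_policy_eval_op[of r M]]]
    by (auto simp: incseq_def le_fun_def)
  then have "(\<lambda>k. (?G ^^ k) bot x) \<longlonglongrightarrow> lfp ?G x"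
    unfolding sup_continuous_lfp[OF sup_continuous_policy_eval_op] SUP_apply by (rule LIMSEQ_SUP)
  then have "(\<lambda>k. lfp ?G x - (?G ^^ k) bot x) \<longlonglongrightarrow> lfp ?G x - lfp ?G x"
    using assms by (intro tendsto_diff_ennreal tendsto_const) auto
  moreover have "lfp ?G x - (?G ^^ k) bot x = (transition_op M ^^ k) (lfp ?G) x" for k
  proof -
    have "(?G ^^ k) bot x \<noteq> top" using lfp_policy_eval_op_split[of r M x k] assms by auto
    then show ?thesis by (subst lfp_policy_eval_op_split[of r M x k]) simp
  qed
  ultimately show ?thesis
    using assms by simp
qed

lemma post_fixpoint_le_policy_eval_op_iterate:
  assumes "\<phi> \<le> policy_eval_op r M \<phi>"
  shows "\<phi> x \<le> (policy_eval_op r M ^^ k) bot x + (transition_op M ^^ k) \<phi> x"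
proof (induction k arbitrary: x)
  case (Suc k)
  have "\<phi> x \<le> r x + transition_op M \<phi> x"
    using assms by (metis le_funD policy_eval_op_def)
  also have "\<dots> \<le> r x +
      transition_op M (\<lambda>y. (policy_eval_op r M ^^ k) bot y + (transition_op M ^^ k) \<phi> y) x"
    by (intro add_left_mono transition_op_mono Suc.IH)
  finally show ?case
    by (simp only: transition_op_add policy_eval_op_iterate_Suc transition_op_iterate_Suc add.assoc)
qed simp

lemma transition_op_iterate_le_cmult:
  "(\<And>y. f y \<le> C * g y) \<Longrightarrow> (transition_op M ^^ k) f x \<le> C * (transition_op M ^^ k) g x"
proof (induction k arbitrary: x)
  case (Suc k)
  then have "(transition_op M ^^ Suc k) f x \<le>
      transition_op M (\<lambda>y. C * (transition_op M ^^ k) g y) x"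
    by (simp add: transition_op_mono)
  then show ?case by (simp add: transition_op_cmult)
qed simp

lemma dominated_post_fixpoint_le_lfp:
  assumes "\<phi> \<le> policy_eval_op r M \<phi>" and "\<And>y. \<phi> y \<le> C * lfp (policy_eval_op r M) y"
    and "C < top" and "lfp (policy_eval_op r M) x < top"
  shows "\<phi> x \<le> lfp (policy_eval_op r M) x"
proof -
  let ?V = "lfp (policy_eval_op r M)" and ?P = "transition_op M"
  have "\<phi> x \<le> ?V x + C * (?P ^^ k) ?V x" for k
  proof -
    have "\<phi> x \<le> (policy_eval_op r M ^^ k) bot x + (?P ^^ k) \<phi> x"
      using assms(1) by (rule post_fixpoint_le_policy_eval_op_iterate)
    also have "\<dots> \<le> ?V x + C * (?P ^^ k) ?V x"
      using lfp_policy_eval_op_split[of r M x k]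
        transition_op_iterate_le_cmult[where f = \<phi> and g = ?V, OF assms(2)]
      by (intro add_mono) (metis le_iff_add, blast)
    finally show ?thesis .
  qed
  moreover have "(\<lambda>k. ?V x + C * (?P ^^ k) ?V x) \<longlonglongrightarrow> ?V x + C * 0"
    using assms(3,4) by (intro tendsto_add tendsto_const ennreal_tendsto_cmult
        transition_op_iterate_lfp_tendsto_0)
  ultimately show ?thesis
    by (intro LIMSEQ_le_const) auto
qed

lemma replace_at_nth_self: "i < length xs \<Longrightarrow> replace_at xs i [xs ! i] = xs"
  by (simp add: replace_at_def id_take_nth_drop[symmetric])

lemma length_replace_at: "i < length xs \<Longrightarrow> length (replace_at xs i ys) = length xs - 1 + length ys"
  by (simp add: replace_at_def)

lemma sum_list_map_replace_at:
  "sum_list (map f (replace_at xs i ys)) = sum_list (map f (replace_at xs i [])) + sum_list (map f ys)"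
  for f :: "'a \<Rightarrow> 'b::comm_monoid_add"
  by (simp add: replace_at_def ac_simps)

lemma etotN_le_etotN_Suc: "etotN p c \<sigma> n h \<le> etotN p c \<sigma> (Suc n) h"
proof (induction n arbitrary: h)
  case (Suc n)
  then show ?case by (auto intro!: nn_integral_mono add_left_mono)
qed simp

lemma ETotal_strat_eq_SUP: "ETotal_strat p c \<alpha> \<sigma> = (SUP N. ETotalN p c N \<alpha> \<sigma>)"
  unfolding ETotal_strat_def ETotalN_def
  by (intro limI LIMSEQ_SUP incseq_SucI etotN_le_etotN_Suc)

lemma last_st_Nil [simp]: "last_st (\<alpha>, []) = \<alpha>"
  and last_st_snoc [simp]: "last_st (\<alpha>, hs @ [s]) = snd s"
  by (simp_all add: last_st_def)

section \<open>Value iteration for branching MDPs\<close>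

locale branching_mdp =
  fixes A :: "'q::finite \<Rightarrow> 'a::finite set"
    and p :: "'q \<Rightarrow> 'a \<Rightarrow> 'q list pmf" and c :: "'q \<Rightarrow> 'a \<Rightarrow> real"
  assumes bmdp: "bmdp A p c"
begin

lemma actions_nonempty: "A q \<noteq> {}"
  using bmdp by (simp add: bmdp_def)

lemma cost_pos: "a \<in> A q \<Longrightarrow> 0 < c q a"
  using bmdp by (simp add: bmdp_def)

lemma finite_set_pmf_successors: "a \<in> A q \<Longrightarrow> finite (set_pmf (p q a))"
  using bmdp by (simp add: bmdp_def)

lemma cost_lower_bound: obtains \<epsilon> where "0 < \<epsilon>" "\<And>q a. a \<in> A q \<Longrightarrow> \<epsilon> \<le> c q a"
proof -
  let ?C = "(\<lambda>(q, a). c q a) ` {(q, a). a \<in> A q}"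
  have "finite ?C" by simp
  moreover have "?C \<noteq> {}" using actions_nonempty by blast
  ultimately show thesis
    using cost_pos by (intro that[of "Min ?C"]) (auto simp: Min_gr_iff intro!: Min_le)
qed

lemma finite_enabled: "finite (enabled A \<alpha>)"
  by (rule finite_subset[of _ "{..<length \<alpha>} \<times> UNIV"]) (auto simp: enabled_def)

lemma enabled_eq_empty_iff: "enabled A \<alpha> = {} \<longleftrightarrow> \<alpha> = []"
proof (cases \<alpha>)
  case (Cons q \<beta>)
  obtain a where "a \<in> A q" using actions_nonempty by blast
  then have "(0, a) \<in> enabled A \<alpha>" using Cons by (simp add: enabled_def)
  then show ?thesis using Cons by blast
qed (simp add: enabled_def)

definition list_qvalue :: "('q list \<Rightarrow> ennreal) \<Rightarrow> 'q list \<Rightarrow> nat \<times> 'a \<Rightarrow> ennreal" where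
  "list_qvalue f \<alpha> e = ennreal (c (\<alpha> ! fst e) (snd e)) +
     (\<integral>\<^sup>+\<beta>. f (replace_at \<alpha> (fst e) \<beta>) \<partial>p (\<alpha> ! fst e) (snd e))"

definition bellman_list :: "('q list \<Rightarrow> ennreal) \<Rightarrow> 'q list \<Rightarrow> ennreal" where
  "bellman_list f \<alpha> = (if \<alpha> = [] then 0 else Min (list_qvalue f \<alpha> ` enabled A \<alpha>))"

definition type_qvalue :: "('q \<Rightarrow> ennreal) \<Rightarrow> 'q \<Rightarrow> 'a \<Rightarrow> ennreal" where
  "type_qvalue f q a = ennreal (c q a) + (\<integral>\<^sup>+\<beta>. sum_list (map f \<beta>) \<partial>p q a)"

definition bellman_type :: "('q \<Rightarrow> ennreal) \<Rightarrow> 'q \<Rightarrow> ennreal" where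
  "bellman_type f q = Min (type_qvalue f q ` A q)"

definition list_value :: "'q list \<Rightarrow> ennreal" where
  "list_value = lfp bellman_list"

definition type_value :: "'q \<Rightarrow> ennreal" where
  "type_value = lfp bellman_type"

lemma sup_continuous_bellman_list: "sup_continuous bellman_list"
proof (intro sup_continuous_fun)
  fix \<alpha> :: "'q list"
  show "sup_continuous (\<lambda>f. bellman_list f \<alpha>)"
  proof (cases "\<alpha> = []")
    case False
    then show ?thesis
      unfolding bellman_list_def list_qvalue_def
      using finite_enabled enabled_eq_empty_iff
      by (simp, intro sup_continuous_Min order_continuous_intros) auto
  qed (simp add: bellman_list_def sup_continuous_const)
qed

lemma sup_continuous_bellman_type: "sup_continuous bellman_type"
  unfolding bellman_type_def type_qvalue_def
  using actions_nonempty
  by (intro sup_continuous_fun sup_continuous_Min order_continuous_intros sup_continuous_sum_list_map) auto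

lemma bellman_list_le_list_qvalue: "e \<in> enabled A \<alpha> \<Longrightarrow> bellman_list f \<alpha> \<le> list_qvalue f \<alpha> e"
  using finite_enabled by (auto simp: bellman_list_def enabled_def)

lemma bellman_list_Nil [simp]: "bellman_list f [] = 0"
  by (simp add: bellman_list_def)

lemma le_bellman_list_iff:
  "\<alpha> \<noteq> [] \<Longrightarrow> x \<le> bellman_list f \<alpha> \<longleftrightarrow> (\<forall>e\<in>enabled A \<alpha>. x \<le> list_qvalue f \<alpha> e)"
  using finite_enabled enabled_eq_empty_iff by (simp add: bellman_list_def)

lemma bellman_type_le_type_qvalue: "a \<in> A q \<Longrightarrow> bellman_type f q \<le> type_qvalue f q a"
  by (simp add: bellman_type_def)

lemma bellman_type_attained: obtains a where "a \<in> A q" "bellman_type f q = type_qvalue f q a"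
proof -
  have "bellman_type f q \<in> type_qvalue f q ` A q"
    unfolding bellman_type_def using actions_nonempty by (intro Min_in) auto
  then show thesis using that by blast
qed

lemma bellman_list_list_value: "bellman_list list_value = list_value"
  unfolding list_value_def by (rule lfp_fixpoint[OF sup_continuous_mono[OF sup_continuous_bellman_list]])

lemma bellman_type_type_value: "bellman_type type_value = type_value"
  unfolding type_value_def by (rule lfp_fixpoint[OF sup_continuous_mono[OF sup_continuous_bellman_type]])

lemma list_value_eq_SUP: "list_value \<alpha> = (SUP n. (bellman_list ^^ n) bot \<alpha>)"
  unfolding list_value_def sup_continuous_lfp[OF sup_continuous_bellman_list] by (rule SUP_apply)

definition opt_action :: "'q list \<Rightarrow> nat \<times> 'a" where
  "opt_action \<alpha> = (SOME e. e \<in> enabled A \<alpha> \<and> list_qvalue list_value \<alpha> e = list_value \<alpha>)"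

lemma opt_action:
  assumes "\<alpha> \<noteq> []"
  shows "opt_action \<alpha> \<in> enabled A \<alpha>" and "list_qvalue list_value \<alpha> (opt_action \<alpha>) = list_value \<alpha>"
proof -
  have "Min (list_qvalue list_value \<alpha> ` enabled A \<alpha>) \<in> list_qvalue list_value \<alpha> ` enabled A \<alpha>"
    using assms finite_enabled enabled_eq_empty_iff by (intro Min_in) auto
  moreover have "Min (list_qvalue list_value \<alpha> ` enabled A \<alpha>) = list_value \<alpha>"
    using assms bellman_list_list_value by (metis bellman_list_def)
  ultimately have "\<exists>e. e \<in> enabled A \<alpha> \<and> list_qvalue list_value \<alpha> e = list_value \<alpha>"
    by (metis imageE)
  then have "opt_action \<alpha> \<in> enabled A \<alpha> \<and> list_qvalue list_value \<alpha> (opt_action \<alpha>) = list_value \<alpha>"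
    unfolding opt_action_def by (rule someI_ex)
  then show "opt_action \<alpha> \<in> enabled A \<alpha>" "list_qvalue list_value \<alpha> (opt_action \<alpha>) = list_value \<alpha>"
    by auto
qed

lemma bellman_list_iterate_le_etotN:
  assumes "strategy A \<sigma>"
  shows "(bellman_list ^^ n) bot (last_st h) \<le> etotN p c \<sigma> n h"
proof (induction n arbitrary: h)
  case (Suc n)
  show ?case
  proof (cases "last_st h = []")
    case False
    let ?\<alpha> = "last_st h"
    have "bellman_list ((bellman_list ^^ n) bot) ?\<alpha> \<le>
        ennreal (c (?\<alpha> ! fst e) (snd e)) +
          (\<integral>\<^sup>+\<beta>. etotN p c \<sigma> n (fst h, snd h @ [(e, replace_at ?\<alpha> (fst e) \<beta>)]) \<partial>p (?\<alpha> ! fst e) (snd e))"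
      if "e \<in> set_pmf (\<sigma> h)" for e
    proof -
      have "e \<in> enabled A ?\<alpha>" using assms False that unfolding strategy_def by blast
      then have "bellman_list ((bellman_list ^^ n) bot) ?\<alpha> \<le> list_qvalue ((bellman_list ^^ n) bot) ?\<alpha> e"
        by (rule bellman_list_le_list_qvalue)
      also have "\<dots> \<le> ennreal (c (?\<alpha> ! fst e) (snd e)) +
          (\<integral>\<^sup>+\<beta>. etotN p c \<sigma> n (fst h, snd h @ [(e, replace_at ?\<alpha> (fst e) \<beta>)]) \<partial>p (?\<alpha> ! fst e) (snd e))"
        unfolding list_qvalue_def
        by (intro add_left_mono nn_integral_mono) (metis Suc.IH last_st_snoc snd_conv)
      finally show ?thesis .
    qed
    then have "(\<integral>\<^sup>+e. bellman_list ((bellman_list ^^ n) bot) ?\<alpha> \<partial>\<sigma> h) \<le> etotN p c \<sigma> (Suc n) h"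
      using False by (simp only: etotN.simps if_False) (intro nn_integral_mono_AE AE_pmfI)
    then show ?thesis by (simp only: funpow.simps(2) comp_apply nn_integral_const_pmf)
  qed (simp add: bellman_list_def)
qed (simp add: bot_ennreal)

lemma list_value_le_ETotal_strat: "strategy A \<sigma> \<Longrightarrow> list_value \<alpha> \<le> ETotal_strat p c \<alpha> \<sigma>"
  using bellman_list_iterate_le_etotN[of \<sigma> _ "(\<alpha>, [])"]
  unfolding list_value_eq_SUP ETotal_strat_eq_SUP ETotalN_def
  by (intro SUP_mono) auto

definition opt_strategy :: "('q, 'a) strat" where
  "opt_strategy h = return_pmf (opt_action (last_st h))"

lemma strategy_opt_strategy: "strategy A opt_strategy"
  using opt_action(1) by (simp add: strategy_def opt_strategy_def)

lemma etotN_opt_strategy_le: "etotN p c opt_strategy n h \<le> list_value (last_st h)"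
proof (induction n arbitrary: h)
  case (Suc n)
  show ?case
  proof (cases "last_st h = []")
    case False
    let ?\<alpha> = "last_st h" and ?e = "opt_action (last_st h)"
    have "etotN p c opt_strategy (Suc n) h = ennreal (c (?\<alpha> ! fst ?e) (snd ?e)) +
        (\<integral>\<^sup>+\<beta>. etotN p c opt_strategy n (fst h, snd h @ [(?e, replace_at ?\<alpha> (fst ?e) \<beta>)]) \<partial>p (?\<alpha> ! fst ?e) (snd ?e))"
      using False by (simp add: opt_strategy_def)
    also have "\<dots> \<le> list_qvalue list_value ?\<alpha> ?e"
      unfolding list_qvalue_def using Suc.IH[of "(fst h, snd h @ [(?e, replace_at ?\<alpha> (fst ?e) _)])"]
      by (intro add_left_mono nn_integral_mono) simp
    also have "\<dots> = list_value ?\<alpha>" using opt_action(2)[OF False] .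
    finally show ?thesis .
  qed simp
qed simp

lemma ETotal_eq_list_value: "ETotal A p c \<alpha> = list_value \<alpha>"
proof (rule antisym)
  have "ETotal A p c \<alpha> \<le> ETotal_strat p c \<alpha> opt_strategy"
    unfolding ETotal_def using strategy_opt_strategy by (intro INF_lower) simp
  also have "\<dots> \<le> list_value \<alpha>"
    using etotN_opt_strategy_le[of _ "(\<alpha>, [])"]
    unfolding ETotal_strat_eq_SUP ETotalN_def by (intro SUP_least) simp
  finally show "ETotal A p c \<alpha> \<le> list_value \<alpha>" .
qed (auto simp: ETotal_def intro!: INF_greatest list_value_le_ETotal_strat)

lemma list_qvalue_sum_list:
  assumes "i < length \<alpha>"
  shows "list_qvalue (\<lambda>\<beta>. sum_list (map f \<beta>)) \<alpha> (i, a) =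
    sum_list (map f (replace_at \<alpha> i [])) + type_qvalue f (\<alpha> ! i) a"
proof -
  have "(\<integral>\<^sup>+\<beta>. sum_list (map f (replace_at \<alpha> i \<beta>)) \<partial>p (\<alpha> ! i) a) =
      sum_list (map f (replace_at \<alpha> i [])) + (\<integral>\<^sup>+\<beta>. sum_list (map f \<beta>) \<partial>p (\<alpha> ! i) a)"
    by (subst sum_list_map_replace_at) (simp add: nn_integral_add nn_integral_const_pmf)
  then show ?thesis by (simp add: list_qvalue_def type_qvalue_def ac_simps)
qed

lemma list_value_le_sum_list_type_value: "list_value \<alpha> \<le> sum_list (map type_value \<alpha>)"
proof -
  have "bellman_list (\<lambda>\<beta>. sum_list (map type_value \<beta>)) \<alpha> \<le> sum_list (map type_value \<alpha>)" for \<alpha>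
  proof (cases "\<alpha> = []")
    case False
    then have "0 < length \<alpha>" by simp
    obtain a where a: "a \<in> A (\<alpha> ! 0)" "bellman_type type_value (\<alpha> ! 0) = type_qvalue type_value (\<alpha> ! 0) a"
      by (rule bellman_type_attained)
    then have "(0, a) \<in> enabled A \<alpha>" using False by (simp add: enabled_def)
    then have "bellman_list (\<lambda>\<beta>. sum_list (map type_value \<beta>)) \<alpha> \<le>
        sum_list (map type_value (replace_at \<alpha> 0 [])) + type_qvalue type_value (\<alpha> ! 0) a"
      using bellman_list_le_list_qvalue list_qvalue_sum_list[OF \<open>0 < length \<alpha>\<close>] by metis
    also have "\<dots> = sum_list (map type_value (replace_at \<alpha> 0 [\<alpha> ! 0]))"
      using a(2) bellman_type_type_value by (simp add: sum_list_map_replace_at[of _ _ _ "[_]"])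
    also have "\<dots> = sum_list (map type_value \<alpha>)"
      using \<open>0 < length \<alpha>\<close> by (simp add: replace_at_nth_self)
    finally show ?thesis .
  qed simp
  then have "list_value \<le> (\<lambda>\<beta>. sum_list (map type_value \<beta>))"
    unfolding list_value_def by (intro lfp_lowerbound le_funI)
  then show ?thesis by (rule le_funD)
qed

lemma bellman_list_iterate_ge_length:
  assumes "0 \<le> \<epsilon>" "\<And>q a. a \<in> A q \<Longrightarrow> \<epsilon> \<le> c q a"
  shows "ennreal \<epsilon> * of_nat (min m (length \<alpha>)) \<le> (bellman_list ^^ m) bot \<alpha>"
proof (induction m arbitrary: \<alpha>)
  case (Suc m)
  show ?case
  proof (cases "\<alpha> = []")
    case False
    have "ennreal \<epsilon> * of_nat (min (Suc m) (length \<alpha>)) \<le> list_qvalue ((bellman_list ^^ m) bot) \<alpha> e"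
      if e: "e \<in> enabled A \<alpha>" for e
    proof -
      have i: "fst e < length \<alpha>" "snd e \<in> A (\<alpha> ! fst e)" using e by (auto simp: enabled_def)
      have "ennreal \<epsilon> * of_nat (min m (length \<alpha> - 1)) \<le> (bellman_list ^^ m) bot (replace_at \<alpha> (fst e) \<beta>)"
        for \<beta>
      proof -
        have "ennreal \<epsilon> * of_nat (min m (length \<alpha> - 1)) \<le>
            ennreal \<epsilon> * of_nat (min m (length (replace_at \<alpha> (fst e) \<beta>)))"
          using length_replace_at[OF i(1)] by (intro mult_left_mono) auto
        also have "\<dots> \<le> (bellman_list ^^ m) bot (replace_at \<alpha> (fst e) \<beta>)"
          by (rule Suc.IH)
        finally show ?thesis .
      qed
      then have "ennreal \<epsilon> * of_nat (min m (length \<alpha> - 1)) \<le>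
          (\<integral>\<^sup>+\<beta>. (bellman_list ^^ m) bot (replace_at \<alpha> (fst e) \<beta>) \<partial>p (\<alpha> ! fst e) (snd e))"
        by (metis nn_integral_mono nn_integral_const_pmf)
      moreover have "ennreal \<epsilon> \<le> ennreal (c (\<alpha> ! fst e) (snd e))"
        using assms(2)[OF i(2)] by (rule ennreal_leI)
      moreover have "min (Suc m) (length \<alpha>) = Suc (min m (length \<alpha> - 1))"
        using False by (cases \<alpha>) auto
      ultimately show ?thesis
        unfolding list_qvalue_def by (simp add: distrib_left add_mono)
    qed
    then show ?thesis
      by (simp only: funpow.simps(2) comp_apply le_bellman_list_iff[OF False]) blast
  qed simp
qed simp

lemma length_le_list_value:
  assumes "0 \<le> \<epsilon>" "\<And>q a. a \<in> A q \<Longrightarrow> \<epsilon> \<le> c q a"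
  shows "ennreal \<epsilon> * of_nat (length \<alpha>) \<le> list_value \<alpha>"
  using bellman_list_iterate_ge_length[OF assms, of "length \<alpha>" \<alpha>]
  unfolding list_value_eq_SUP by (simp add: SUP_upper2)

lemma sum_list_dominated_by_list_value:
  assumes "\<And>q. f q < top"
  obtains C where "C < top" "\<And>\<alpha>. sum_list (map f \<alpha>) \<le> C * list_value \<alpha>"
proof -
  obtain \<epsilon> where \<epsilon>: "0 < \<epsilon>" "\<And>q a. a \<in> A q \<Longrightarrow> \<epsilon> \<le> c q a"
    using cost_lower_bound by blast
  define B where "B = Max (range f)"
  have "B < top" using assms by (simp add: B_def)
  define C where "C = B * ennreal (1 / \<epsilon>)"
  have "C < top" using \<open>B < top\<close> by (simp add: C_def ennreal_mult_less_top)
  moreover have "sum_list (map f \<alpha>) \<le> C * list_value \<alpha>" for \<alpha>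
  proof -
    have "sum_list (map f \<alpha>) \<le> sum_list (map (\<lambda>_. B) \<alpha>)"
      by (intro sum_list_mono) (simp add: B_def)
    also have "\<dots> = B * (ennreal (1 / \<epsilon>) * ennreal \<epsilon>) * of_nat (length \<alpha>)"
      using \<epsilon>(1) by (simp add: sum_list_triv ac_simps flip: ennreal_mult)
    also have "\<dots> = C * (ennreal \<epsilon> * of_nat (length \<alpha>))"
      by (simp only: C_def ac_simps)
    also have "\<dots> \<le> C * list_value \<alpha>"
      using \<epsilon> by (intro mult_left_mono length_le_list_value) auto
    finally show ?thesis .
  qed
  ultimately show thesis by (rule that)
qed

definition opt_cost :: "'q list \<Rightarrow> ennreal" where
  "opt_cost \<alpha> = (if \<alpha> = [] then 0 else ennreal (c (\<alpha> ! fst (opt_action \<alpha>)) (snd (opt_action \<alpha>))))"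

text \<open>The empty list is made absorbing, so that \<open>opt_kernel\<close> is a total Markov kernel.\<close>

definition opt_kernel :: "'q list \<Rightarrow> 'q list pmf" where
  "opt_kernel \<alpha> = (if \<alpha> = [] then return_pmf [] else
     map_pmf (replace_at \<alpha> (fst (opt_action \<alpha>))) (p (\<alpha> ! fst (opt_action \<alpha>)) (snd (opt_action \<alpha>))))"

lemma policy_eval_op_opt:
  "policy_eval_op opt_cost opt_kernel f \<alpha> = (if \<alpha> = [] then f [] else list_qvalue f \<alpha> (opt_action \<alpha>))"
  by (simp add: policy_eval_op_def transition_op_def opt_cost_def opt_kernel_def list_qvalue_def)

lemma lfp_policy_eval_op_opt: "lfp (policy_eval_op opt_cost opt_kernel) = list_value"
proof (rule antisym)
  show "lfp (policy_eval_op opt_cost opt_kernel) \<le> list_value"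
    by (rule lfp_lowerbound) (simp add: le_fun_def policy_eval_op_opt opt_action(2))
  show "list_value \<le> lfp (policy_eval_op opt_cost opt_kernel)"
    unfolding list_value_def
    by (intro lfp_mono le_funI) (simp add: policy_eval_op_opt bellman_list_le_list_qvalue opt_action(1))
qed

lemma sum_list_post_fixpoint_opt:
  assumes "f \<le> bellman_type f"
  shows "(\<lambda>\<alpha>. sum_list (map f \<alpha>)) \<le> policy_eval_op opt_cost opt_kernel (\<lambda>\<alpha>. sum_list (map f \<alpha>))"
proof (rule le_funI)
  fix \<alpha> :: "'q list"
  show "sum_list (map f \<alpha>) \<le> policy_eval_op opt_cost opt_kernel (\<lambda>\<alpha>. sum_list (map f \<alpha>)) \<alpha>"
  proof (cases "\<alpha> = []")
    case False
    obtain i a where ia: "opt_action \<alpha> = (i, a)" by force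
    then have i: "i < length \<alpha>" and a: "a \<in> A (\<alpha> ! i)"
      using opt_action(1)[OF False] by (auto simp: enabled_def)
    have "f (\<alpha> ! i) \<le> type_qvalue f (\<alpha> ! i) a"
      using le_funD[OF assms] bellman_type_le_type_qvalue[OF a] by (rule order_trans)
    have "sum_list (map f \<alpha>) = sum_list (map f (replace_at \<alpha> i [])) + f (\<alpha> ! i)"
      using sum_list_map_replace_at[of f \<alpha> i "[\<alpha> ! i]"] by (simp add: replace_at_nth_self[OF i])
    also have "\<dots> \<le> sum_list (map f (replace_at \<alpha> i [])) + type_qvalue f (\<alpha> ! i) a"
      using \<open>f (\<alpha> ! i) \<le> type_qvalue f (\<alpha> ! i) a\<close> by (rule add_left_mono)
    also have "\<dots> = list_qvalue (\<lambda>\<alpha>. sum_list (map f \<alpha>)) \<alpha> (i, a)"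
      by (rule list_qvalue_sum_list[OF i, symmetric])
    also have "\<dots> = policy_eval_op opt_cost opt_kernel (\<lambda>\<alpha>. sum_list (map f \<alpha>)) \<alpha>"
      using False ia by (simp only: policy_eval_op_opt if_False)
    finally show ?thesis .
  qed simp
qed

lemma sum_list_le_list_value:
  assumes "f \<le> bellman_type f" and "\<And>q. f q < top"
  shows "sum_list (map f \<alpha>) \<le> list_value \<alpha>"
proof (cases "list_value \<alpha> < top")
  case True
  obtain C where "C < top" "\<And>\<beta>. sum_list (map f \<beta>) \<le> C * list_value \<beta>"
    using sum_list_dominated_by_list_value[of f] assms(2) by blast
  with True show ?thesis
    using dominated_post_fixpoint_le_lfp[OF sum_list_post_fixpoint_opt[OF assms(1)], of C \<alpha>]
    unfolding lfp_policy_eval_op_opt by blast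
qed (simp add: not_less top_unique)

lemma bellman_type_iterate_less_top: "(bellman_type ^^ n) bot q < top"
proof (induction n arbitrary: q)
  case (Suc n)
  obtain a where a: "a \<in> A q" using actions_nonempty by blast
  have "(\<integral>\<^sup>+\<beta>. sum_list (map ((bellman_type ^^ n) bot) \<beta>) \<partial>p q a) =
      (\<Sum>\<beta>\<in>set_pmf (p q a). sum_list (map ((bellman_type ^^ n) bot) \<beta>) * pmf (p q a) \<beta>)"
    using finite_set_pmf_successors[OF a] by (rule nn_integral_measure_pmf_finite) simp
  also have "\<dots> < top"
  proof -
    have "sum_list (map ((bellman_type ^^ n) bot) \<beta>) < top" for \<beta>
      using Suc.IH by (rule ennreal_sum_list_less_top)
    then show ?thesis
      using finite_set_pmf_successors[OF a] by (simp add: ennreal_mult_less_top)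
  qed
  finally have "type_qvalue ((bellman_type ^^ n) bot) q a < top"
    by (simp add: type_qvalue_def)
  then show ?case
    unfolding funpow.simps(2) comp_apply by (rule le_less_trans[OF bellman_type_le_type_qvalue[OF a]])
qed (simp add: bot_ennreal)

lemma sum_list_type_value_le_list_value: "sum_list (map type_value \<alpha>) \<le> list_value \<alpha>"
proof -
  have "mono (\<lambda>n. (bellman_type ^^ n) bot)"
    by (rule mono_funpow[OF sup_continuous_mono[OF sup_continuous_bellman_type]])
  then have "sum_list (map type_value \<alpha>) = (SUP n. sum_list (map ((bellman_type ^^ n) bot) \<alpha>))"
    unfolding type_value_def sup_continuous_lfp[OF sup_continuous_bellman_type]
    by (rule sup_continuousD[OF sup_continuous_sum_list_map])
  also have "\<dots> \<le> list_value \<alpha>"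
  proof (rule SUP_least)
    fix n
    have "(bellman_type ^^ n) bot \<le> (bellman_type ^^ Suc n) bot"
      using \<open>mono (\<lambda>n. (bellman_type ^^ n) bot)\<close> by (rule monoD) simp
    then have "(bellman_type ^^ n) bot \<le> bellman_type ((bellman_type ^^ n) bot)"
      by (simp only: funpow.simps(2) comp_apply)
    then show "sum_list (map ((bellman_type ^^ n) bot) \<alpha>) \<le> list_value \<alpha>"
      using bellman_type_iterate_less_top by (rule sum_list_le_list_value)
  qed
  finally show ?thesis .
qed

lemma ETotal_eq_sum_list_type_value: "ETotal A p c \<alpha> = sum_list (map type_value \<alpha>)"
  using ETotal_eq_list_value list_value_le_sum_list_type_value sum_list_type_value_le_list_value
  by (metis antisym)

end

theorem mainTheorem2:
  fixes A :: "'q::finite \<Rightarrow> 'a::finite set"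
    and p :: "'q \<Rightarrow> 'a \<Rightarrow> 'q list pmf" and c :: "'q \<Rightarrow> 'a \<Rightarrow> real"
  assumes "bmdp A p c"
  shows "(\<forall>\<alpha>. ETotal A p c \<alpha> = (\<Sum>i<length \<alpha>. ETotal A p c [\<alpha> ! i])) \<and>
         (\<forall>q. ETotal A p c [q] =
           Min ((\<lambda>a. ennreal (c q a) +
                   \<integral>\<^sup>+ \<beta>. (\<Sum>i<length \<beta>. ETotal A p c [\<beta> ! i]) \<partial>measure_pmf (p q a)) ` A q))"
proof -
  interpret branching_mdp A p c by unfold_locales (rule assms)
  have singleton: "ETotal A p c [q] = type_value q" for q
    by (simp add: ETotal_eq_sum_list_type_value)
  have sum_nth: "sum_list (map f \<alpha>) = (\<Sum>i<length \<alpha>. f (\<alpha> ! i))" for f :: "'q \<Rightarrow> ennreal" and \<alpha>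
    by (simp add: sum_list_sum_nth atLeast0LessThan)
  show ?thesis
    using bellman_type_type_value
    by (simp add: singleton ETotal_eq_sum_list_type_value sum_nth fun_eq_iff
        bellman_type_def type_qvalue_def)
qed

end
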